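(* Let $B$ and $k$ be positive integers and let $G=(V,E)$ be a graph with $m=|E|$ edges and maximum degree at most $B$. If $G$ has a vertex cover with at most $m/B+k$ vertices, then there exists a set $D\subseteq E$ with $|D|\le kB$ such that the graph $G-D=(V,E\setminus D)$ is bipartite.
   Context: A vertex cover of a graph $G=(V,E)$ is a set $C\subseteq V$ such that every edge of $G$ has at least one endpoint in $C$. *)

theory Defs
  imports Complex_Main
begin

definition simple_graph :: "'a set \<Rightarrow> 'a set set \<Rightarrow> bool" where
  "simple_graph V E \<longleftrightarrow> finite V \<and> (\<forall>e\<in>E. e \<subseteq> V \<and> card e = 2)"

definition degree :: "'a set set \<Rightarrow> 'a \<Rightarrow> nat" where
  "degree E v = card {e\<in>E. v \<in> e}"

definition max_degree_le :: "'a set \<Rightarrow> 'a set set \<Rightarrow> nat \<Rightarrow> bool" where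
  "max_degree_le V E B \<longleftrightarrow> (\<forall>v\<in>V. degree E v \<le> B)"

definition vertex_cover :: "'a set \<Rightarrow> 'a set set \<Rightarrow> 'a set \<Rightarrow> bool" where
  "vertex_cover V E C \<longleftrightarrow> C \<subseteq> V \<and> (\<forall>e\<in>E. e \<inter> C \<noteq> {})"

definition bipartite :: "'a set \<Rightarrow> 'a set set \<Rightarrow> bool" where
  "bipartite V E \<longleftrightarrow> (\<exists>X\<subseteq>V. \<forall>e\<in>E. card (e \<inter> X) = 1 \<and> card (e - X) = 1)"

end

theory Submission
  imports Defs
begin

text \<open>
  Let C be a vertex cover with at most m/B + k vertices and let D be the set
  of edges having both endpoints in C.  Every edge meets C in one or two vertices, and in
  two exactly when it lies in D; counting vertex-edge incidences inside C therefore gives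
  the double-counting identity  sum of degrees over C = |E| + |D|.  Since every degree is at
  most B, this sum is at most |C| B <= m + kB, hence |D| <= kB.  After deleting D every
  remaining edge has exactly one endpoint in C, so C and V - C form a bipartition of G - D.
\<close>

lemma simple_graph_finite_edges:
  assumes "simple_graph V E"
  shows "finite E"
proof -
  have "E \<subseteq> Pow V" using assms by (auto simp: simple_graph_def)
  then show ?thesis using assms finite_subset by (auto simp: simple_graph_def)
qed

lemma simple_graph_edge_finite:
  assumes "simple_graph V E" and "e \<in> E"
  shows "finite e" and "card e = 2"
  using assms by (auto simp: simple_graph_def intro: card_ge_0_finite)

lemma sum_degree_eq_sum_card_inter:
  assumes "finite E" and "finite C"
  shows "(\<Sum>v\<in>C. degree E v) = (\<Sum>e\<in>E. card (e \<inter> C))"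
proof -
  have "(\<Sum>v\<in>C. degree E v) = (\<Sum>v\<in>C. \<Sum>e\<in>E. if v \<in> e then 1 else 0 :: nat)"
    unfolding degree_def using assms(1) by (simp add: sum.If_cases Int_def)
  also have "\<dots> = (\<Sum>e\<in>E. \<Sum>v\<in>C. if v \<in> e then 1 else 0 :: nat)"
    by (rule sum.swap)
  also have "\<dots> = (\<Sum>e\<in>E. card (e \<inter> C))"
    using assms(2) by (simp add: sum.If_cases Int_commute)
  finally show ?thesis .
qed

lemma card_edge_inter_cover:
  assumes "simple_graph V E" and "vertex_cover V E C" and "e \<in> E"
  shows "card (e \<inter> C) = (if e \<subseteq> C then 2 else 1)"
proof -
  have fin: "finite e" and two: "card e = 2"
    using simple_graph_edge_finite[OF assms(1,3)] by auto
  have nonzero: "card (e \<inter> C) \<noteq> 0"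
    using assms(2,3) fin by (auto simp: vertex_cover_def)
  show ?thesis
  proof (cases "e \<subseteq> C")
    case True
    then show ?thesis using two by (simp add: Int_absorb2)
  next
    case False
    then have "e \<inter> C \<subset> e" by auto
    then have "card (e \<inter> C) < 2" using psubset_card_mono[OF fin] two by auto
    then show ?thesis using nonzero False by auto
  qed
qed

lemma sum_degree_cover:
  assumes "simple_graph V E" and "vertex_cover V E C"
  shows "(\<Sum>v\<in>C. degree E v) = card E + card {e\<in>E. e \<subseteq> C}"
proof -
  have finE: "finite E" using simple_graph_finite_edges[OF assms(1)] .
  have "finite C"
    using assms finite_subset by (auto simp: simple_graph_def vertex_cover_def)
  then have "(\<Sum>v\<in>C. degree E v) = (\<Sum>e\<in>E. card (e \<inter> C))"
    using sum_degree_eq_sum_card_inter finE by blast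
  also have "\<dots> = (\<Sum>e\<in>E. 1 + (if e \<subseteq> C then 1 else 0))"
    using card_edge_inter_cover[OF assms] by (intro sum.cong) auto
  also have "\<dots> = card E + (\<Sum>e\<in>E. if e \<subseteq> C then 1 else 0)"
    by (simp only: sum.distrib) simp
  also have "\<dots> = card E + card {e\<in>E. e \<subseteq> C}"
    using finE by (simp add: sum.If_cases Int_def)
  finally show ?thesis .
qed

lemma sum_degree_le_max_degree:
  assumes "max_degree_le V E B" and "C \<subseteq> V"
  shows "(\<Sum>v\<in>C. degree E v) \<le> card C * B"
proof -
  have "(\<Sum>v\<in>C. degree E v) \<le> (\<Sum>v\<in>C. B)"
    using assms by (intro sum_mono) (auto simp: max_degree_le_def)
  then show ?thesis by simp
qed

lemma bipartite_delete_edges_inside_cover: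
  assumes "simple_graph V E" and "vertex_cover V E C"
  shows "bipartite V (E - {e\<in>E. e \<subseteq> C})"
  unfolding bipartite_def
proof (intro exI[of _ C] conjI ballI)
  show "C \<subseteq> V" using assms(2) by (simp add: vertex_cover_def)
  fix e assume "e \<in> E - {e\<in>E. e \<subseteq> C}"
  then have e: "e \<in> E" and "\<not> e \<subseteq> C" by auto
  then show one: "card (e \<inter> C) = 1"
    using card_edge_inter_cover[OF assms] by simp
  have "finite e" and "card e = 2" using simple_graph_edge_finite[OF assms(1) e] by auto
  moreover have "card e = card (e \<inter> C) + card (e - C)"
    using \<open>finite e\<close> by (metis card_Int_Diff)
  ultimately show "card (e - C) = 1" using one by simp
qed

lemma count_bound:
  fixes m d c B k :: nat
  assumes "B > 0" and "m + d \<le> c * B" and "real c \<le> real m / real B + real k"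
  shows "d \<le> k * B"
proof -
  have "real c * real B \<le> (real m / real B + real k) * real B"
    using assms(1,3) by (intro mult_right_mono) auto
  also have "\<dots> = real m + real k * real B" using assms(1) by (simp add: field_simps)
  finally have "real m + real d \<le> real m + real k * real B"
    using assms(2) by (metis of_nat_add of_nat_le_iff of_nat_mult order_trans)
  then show ?thesis by (metis add_le_cancel_left of_nat_le_iff of_nat_mult)
qed

theorem lemma2:
  fixes V :: "'a set" and E :: "'a set set" and B k :: nat
  assumes "B > 0" and "k > 0"
    and "simple_graph V E"
    and "max_degree_le V E B"
    and "\<exists>C. vertex_cover V E C \<and> real (card C) \<le> real (card E) / real B + real k"
  shows "\<exists>D\<subseteq>E. card D \<le> k * B \<and> bipartite V (E - D)"
proof -
  obtain C where cover: "vertex_cover V E C"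
    and small: "real (card C) \<le> real (card E) / real B + real k"
    using assms(5) by blast
  define D where "D = {e\<in>E. e \<subseteq> C}"
  have "card E + card D = (\<Sum>v\<in>C. degree E v)"
    unfolding D_def using sum_degree_cover[OF assms(3) cover] by (rule sym)
  also have "\<dots> \<le> card C * B"
    using cover by (intro sum_degree_le_max_degree[OF assms(4)]) (simp add: vertex_cover_def)
  finally have "card E + card D \<le> card C * B" .
  then have "card D \<le> k * B" by (rule count_bound[OF assms(1) _ small])
  moreover have "bipartite V (E - D)"
    unfolding D_def using bipartite_delete_edges_inside_cover[OF assms(3) cover] .
  moreover have "D \<subseteq> E" unfolding D_def by blast
  ultimately show ?thesis by blast
qed

end
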